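(* In the setting described in the context, let $z_j=\frac1n\sum_{i=1}^n -B_\delta'(y_i\mathbf{x}_i^\top\boldsymbol\beta^\star)\,y_ix_{ij}$ for $j=1,\dots,p$, and $z^\star=\max_{j=1,\dots,p}|z_j|$. Then each $z_j$ is sub-Gaussian with variance proxy $\frac{M^2}{n}$, and for all $t>0$, $$P(z^\star>t)\le 2p\exp\Big(\frac{-t^2n}{2M^2}\Big).$$
   Context: Data: $(\mathbf{x}_i,y_i)$, $i=1,\dots,n$, i.i.d. copies of $(\mathbf{x},y)$ with $\mathbf{x}_i=(x_{i1},\dots,x_{ip})\in\mathbb{R}^p$, $y\in\{-1,1\}$. For $\delta>0$, $B_\delta(t)=(1-t)_+$ if $|t-1|>\delta$ and $B_\delta(t)=\frac{1}{8\delta^{3}}\{\frac{(1-t+\delta)^{4}}{2}-(1-t-\delta)(1-t+\delta)^{3}\}$ if $|t-1|\le\delta$. $\boldsymbol\beta^\star$ is the (unique) minimizer of $\mathbb{E}[B_\delta(y\mathbf{x}^\top\boldsymbol\beta)]$. (A3): the columns of the design matrix satisfy $\big(\sum_{i=1}^n x_{ij}^2\big)^{1/2}\le M$ for all $j$. (A4): the conditional densities of $\mathbf{x}$ given $y=1$ and given $y=-1$ are continuous and have finite first moment. A random variable $z$ is sub-Gaussian with variance proxy $\sigma^2$ if $\mathbb{E}[e^{tz}]\le e^{t^2\sigma^2/2}$ for all $t\in\mathbb{R}$. *)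

theory Defs
  imports "HOL-Probability.Probability"
begin

definition Bdelta :: "real \<Rightarrow> real \<Rightarrow> real" where
  "Bdelta \<delta> t =
     (if \<bar>t - 1\<bar> > \<delta> then max (1 - t) 0
      else (1 / (8 * \<delta> ^ 3)) *
           ((1 - t + \<delta>) ^ 4 / 2 - (1 - t - \<delta>) * (1 - t + \<delta>) ^ 3))"

definition subgaussian :: "'w measure \<Rightarrow> ('w \<Rightarrow> real) \<Rightarrow> real \<Rightarrow> bool" where
  "subgaussian P z s2 \<longleftrightarrow>
     z \<in> borel_measurable P \<and>
     (\<forall>t::real. integrable P (\<lambda>\<omega>. exp (t * z \<omega>)) \<and>
        (\<integral>\<omega>. exp (t * z \<omega>) \<partial>P) \<le> exp (t\<^sup>2 * s2 / 2))"

end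

theory Submission
  imports Defs
begin

(*
  Each z_j is the mean of the n independent summands a_ij = -B'(y_i x_i^T beta* ) y_i x_ij.
  They are bounded by M, because |B'| <= 1 and (A3) bounds every |x_ij| by M. They are also
  centred: B_delta has a (3 / (4 delta))-Lipschitz derivative, so h -> E B(y x^T (beta* + h e_j))
  lies below its tangent at h = 0 plus a quadratic, and minimality at h = 0 forces the slope
  E a_0j to vanish; identical distribution carries this over to every i. Hoeffding's lemma then
  makes each a_ij sub-Gaussian with proxy M^2, independence adds the proxies, and the factor 1/n
  gives M^2 / n. A Chernoff bound for z_j and -z_j and a union bound over the p coordinates yield
  the tail estimate.
*)

lemma DERIV_piecewise:
  fixes g h g' h' :: "real \<Rightarrow> real"
  assumes g: "\<And>t. (g has_real_derivative g' t) (at t)"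
    and h: "\<And>t. (h has_real_derivative h' t) (at t)"
    and "g a = h a" "g' a = h' a"
  shows "((\<lambda>t. if t \<le> a then g t else h t) has_real_derivative (if t \<le> a then g' t else h' t)) (at t)"
proof -
  have "((\<lambda>t. if t \<in> {..a} then g t else h t) has_vector_derivative
          (if t \<in> {..a} then g' t else h' t)) (at t within UNIV)"
  proof (rule has_vector_derivative_If_within_closures[where T = "{a<..}"])
    show "(g has_vector_derivative g' t) (at t within S)" for S
      using g by (simp add: has_real_derivative_iff_has_vector_derivative[symmetric] has_field_derivative_at_within)
    show "(h has_vector_derivative h' t) (at t within S)" for S
      using h by (simp add: has_real_derivative_iff_has_vector_derivative[symmetric] has_field_derivative_at_within)
  qed (use assms in \<open>auto simp: closure_greaterThan\<close>)
  then show ?thesis by (simp add: has_real_derivative_iff_has_vector_derivative)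
qed

lemma eq_0_if_nonneg_linear_plus_quadratic:
  fixes a c :: real
  assumes nonneg: "\<And>h. 0 \<le> h * a + c * h\<^sup>2"
  shows "a = 0"
proof (rule ccontr)
  assume "a \<noteq> 0"
  define k where "k = 2 * (\<bar>c\<bar> + 1)"
  define h where "h = - a / k"
  have "k > 0" by (simp add: k_def add_pos_nonneg)
  then have "a = - k * h" and "h \<noteq> 0" using \<open>a \<noteq> 0\<close> by (auto simp: h_def)
  then have "h * a + c * h\<^sup>2 = (c - k) * h\<^sup>2" by (simp add: algebra_simps power2_eq_square)
  also have "\<dots> < 0" using \<open>h \<noteq> 0\<close> by (intro mult_neg_pos) (auto simp: k_def)
  finally show False using nonneg[of h] by simp
qed

lemma abs_le_sqrt_sum_squares:
  fixes f :: "'a \<Rightarrow> real"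
  assumes "finite I" "i \<in> I"
  shows "\<bar>f i\<bar> \<le> sqrt (\<Sum>k\<in>I. (f k)\<^sup>2)"
  using member_le_L2_set[OF assms, of "\<lambda>k. \<bar>f k\<bar>"] by (simp add: L2_set_def)

lemma vec_nth_measurable [measurable]: "(\<lambda>x::real ^ 'n. x $ i) \<in> borel_measurable borel"
  by (intro borel_measurable_continuous_onI continuous_intros)

lemma integral_comp_eq_if_distr_eq:
  fixes f :: "'b \<Rightarrow> 'c::{banach, second_countable_topology}"
  assumes "distr M N U = distr M N V" "U \<in> measurable M N" "V \<in> measurable M N"
    and "f \<in> borel_measurable N"
  shows "(\<integral>x. f (U x) \<partial>M) = (\<integral>x. f (V x) \<partial>M)"
  using integral_distr[of U M N f] integral_distr[of V M N f] assms by simp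

section \<open>Sub-Gaussian random variables\<close>

lemma subgaussian_measurable: "subgaussian M z s \<Longrightarrow> z \<in> borel_measurable M"
  by (simp add: subgaussian_def)

lemma subgaussianI_nn_integral:
  assumes [measurable]: "z \<in> borel_measurable M"
    and mgf: "\<And>t. (\<integral>\<^sup>+x. ennreal (exp (t * z x)) \<partial>M) \<le> ennreal (exp (t\<^sup>2 * s / 2))"
  shows "subgaussian M z s"
  unfolding subgaussian_def
proof (intro conjI allI)
  fix t
  have fin: "(\<integral>\<^sup>+x. ennreal (exp (t * z x)) \<partial>M) < \<infinity>"
    using mgf[of t] by (simp add: order_le_less_trans)
  show "integrable M (\<lambda>x. exp (t * z x))"
    by (rule integrableI_nonneg) (use fin in auto)
  have "(\<integral>x. exp (t * z x) \<partial>M) = enn2real (\<integral>\<^sup>+x. ennreal (exp (t * z x)) \<partial>M)"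
    by (rule integral_eq_nn_integral) auto
  also have "\<dots> \<le> exp (t\<^sup>2 * s / 2)"
    using enn2real_mono[OF mgf[of t]] by simp
  finally show "(\<integral>x. exp (t * z x) \<partial>M) \<le> exp (t\<^sup>2 * s / 2)" .
qed simp

lemma subgaussian_scale:
  assumes sg: "subgaussian M z s"
  shows "subgaussian M (\<lambda>x. a * z x) (a\<^sup>2 * s)"
  unfolding subgaussian_def
proof (intro conjI allI)
  show "(\<lambda>x. a * z x) \<in> borel_measurable M"
    using subgaussian_measurable[OF sg] by measurable
  fix t
  from sg have "integrable M (\<lambda>x. exp ((t * a) * z x))"
    and "(\<integral>x. exp ((t * a) * z x) \<partial>M) \<le> exp ((t * a)\<^sup>2 * s / 2)"
    by (auto simp: subgaussian_def)
  then show "integrable M (\<lambda>x. exp (t * (a * z x)))"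
    and "(\<integral>x. exp (t * (a * z x)) \<partial>M) \<le> exp (t\<^sup>2 * (a\<^sup>2 * s) / 2)"
    by (simp_all add: mult.assoc power_mult_distrib)
qed

lemma (in prob_space) subgaussian_if_bounded_mean_zero:
  assumes [measurable]: "f \<in> borel_measurable M"
    and bounded: "AE x in M. \<bar>f x\<bar> \<le> c" and mean: "expectation f = 0"
  shows "subgaussian M f (c\<^sup>2)"
proof -
  have Hoeffding: "(\<integral>\<^sup>+x. ennreal (exp (l * g x)) \<partial>M) \<le> ennreal (exp (l\<^sup>2 * c\<^sup>2 / 2))"
    if "l > 0" "g \<in> borel_measurable M" "AE x in M. \<bar>g x\<bar> \<le> c" "expectation g = 0" for l g
  proof -
    interpret interval_bounded_random_variable M g "-c" c
      using that by unfold_locales auto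
    have "(\<integral>\<^sup>+x. ennreal (exp (l * g x)) \<partial>M) \<le> ennreal (exp (l\<^sup>2 * (c - (-c))\<^sup>2 / 8))"
      using Hoeffdings_lemma_nn_integral_0 that by blast
    also have "l\<^sup>2 * (c - (-c))\<^sup>2 / 8 = l\<^sup>2 * c\<^sup>2 / 2" by (simp add: power2_eq_square)
    finally show ?thesis .
  qed
  show ?thesis
  proof (rule subgaussianI_nn_integral)
    fix t :: real
    consider "t > 0" | "t = 0" | "t < 0" by linarith
    then show "(\<integral>\<^sup>+x. ennreal (exp (t * f x)) \<partial>M) \<le> ennreal (exp (t\<^sup>2 * c\<^sup>2 / 2))"
    proof cases
      case 1
      then show ?thesis using Hoeffding bounded mean by simp
    next
      case 2
      then show ?thesis by (simp add: emeasure_space_1)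
    next
      case 3
      then show ?thesis using Hoeffding[of "- t" "\<lambda>x. - f x"] bounded mean by simp
    qed
  qed fact
qed

lemma (in prob_space) subgaussian_sum_indep:
  assumes I: "finite I" and indep: "indep_vars (\<lambda>_. borel) Z I"
    and sg: "\<And>i. i \<in> I \<Longrightarrow> subgaussian M (Z i) (s i)"
  shows "subgaussian M (\<lambda>x. \<Sum>i\<in>I. Z i x) (\<Sum>i\<in>I. s i)"
  unfolding subgaussian_def
proof (intro conjI allI)
  show "(\<lambda>x. \<Sum>i\<in>I. Z i x) \<in> borel_measurable M"
    using sg subgaussian_measurable by (intro borel_measurable_sum) blast
  fix t
  have exp_sum_eq: "exp (t * (\<Sum>i\<in>I. Z i x)) = (\<Prod>i\<in>I. exp (t * Z i x))" for x
    by (simp add: sum_distrib_left exp_sum I)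
  have indep_exp: "indep_vars (\<lambda>_. borel) (\<lambda>i x. exp (t * Z i x)) I"
    by (rule indep_vars_compose2[OF indep]) measurable
  have int: "\<And>i. i \<in> I \<Longrightarrow> integrable M (\<lambda>x. exp (t * Z i x))"
    using sg by (simp add: subgaussian_def)
  show "integrable M (\<lambda>x. exp (t * (\<Sum>i\<in>I. Z i x)))"
    unfolding exp_sum_eq by (rule indep_vars_integrable[OF I indep_exp int])
  have "(\<integral>x. exp (t * (\<Sum>i\<in>I. Z i x)) \<partial>M) = (\<Prod>i\<in>I. \<integral>x. exp (t * Z i x) \<partial>M)"
    unfolding exp_sum_eq by (rule indep_vars_lebesgue_integral[OF I indep_exp int])
  also have "\<dots> \<le> (\<Prod>i\<in>I. exp (t\<^sup>2 * s i / 2))"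
    using sg by (intro prod_mono) (auto simp: subgaussian_def)
  also have "\<dots> = exp (t\<^sup>2 * (\<Sum>i\<in>I. s i) / 2)"
    by (simp add: exp_sum[OF I, symmetric] sum_distrib_left sum_divide_distrib)
  finally show "(\<integral>x. exp (t * (\<Sum>i\<in>I. Z i x)) \<partial>M) \<le> exp (t\<^sup>2 * (\<Sum>i\<in>I. s i) / 2)" .
qed

lemma (in prob_space) subgaussian_tail:
  assumes sg: "subgaussian M z s" and t: "t > 0"
  shows "prob {x \<in> space M. t \<le> z x} \<le> exp (- t\<^sup>2 / (2 * s))"
proof (cases "s > 0")
  case True
  have [measurable]: "z \<in> borel_measurable M" using sg by (rule subgaussian_measurable)
  define l where "l = t / s"
  have "l > 0" using True t by (simp add: l_def)
  have int: "integrable M (\<lambda>x. exp (l * z x))" and mgf: "(\<integral>x. exp (l * z x) \<partial>M) \<le> exp (l\<^sup>2 * s / 2)"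
    using sg by (auto simp: subgaussian_def)
  have "prob {x \<in> space M. t \<le> z x} \<le> exp (- l * t) * (\<integral>x\<in>space M. exp (l * z x) \<partial>M)"
    by (rule Chernoff_ineq_ge[OF \<open>l > 0\<close>])
       (use int in \<open>auto simp: set_integrable_def cong: Bochner_Integration.integrable_cong\<close>)
  also have "\<dots> \<le> exp (- l * t) * exp (l\<^sup>2 * s / 2)"
    using mgf by (simp add: set_integral_space[OF int])
  also have "\<dots> = exp (- t\<^sup>2 / (2 * s))"
    using True by (simp add: l_def field_simps power2_eq_square flip: exp_add)
  finally show ?thesis .
next
  case False
  then have "t\<^sup>2 / (2 * s) \<le> 0" by (intro divide_nonneg_nonpos) auto
  then have "1 \<le> exp (- t\<^sup>2 / (2 * s))" by simp
  then show ?thesis using prob_le_1 by (rule order_trans[rotated])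
qed

lemma (in prob_space) subgaussian_abs_tail:
  assumes sg: "subgaussian M z s" and t: "t > 0"
  shows "prob {x \<in> space M. t \<le> \<bar>z x\<bar>} \<le> 2 * exp (- t\<^sup>2 / (2 * s))"
proof -
  have [measurable]: "z \<in> borel_measurable M" using sg by (rule subgaussian_measurable)
  have "subgaussian M (\<lambda>x. - z x) s" using subgaussian_scale[OF sg, of "-1"] by simp
  then have neg: "prob {x \<in> space M. t \<le> - z x} \<le> exp (- t\<^sup>2 / (2 * s))"
    using t by (rule subgaussian_tail)
  have "prob {x \<in> space M. t \<le> \<bar>z x\<bar>} \<le> prob ({x \<in> space M. t \<le> z x} \<union> {x \<in> space M. t \<le> - z x})"
    by (intro finite_measure_mono) (auto simp: abs_if)
  also have "\<dots> \<le> prob {x \<in> space M. t \<le> z x} + prob {x \<in> space M. t \<le> - z x}"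
    by (rule measure_Un_le) auto
  finally show ?thesis using subgaussian_tail[OF sg t] neg by simp
qed

lemma (in prob_space) subgaussian_max_abs_tail:
  fixes Z :: "'i::finite \<Rightarrow> 'a \<Rightarrow> real"
  assumes sg: "\<And>i. subgaussian M (Z i) s" and t: "t > 0"
  shows "prob {x \<in> space M. t < Max (range (\<lambda>i. \<bar>Z i x\<bar>))} \<le> 2 * real CARD('i) * exp (- t\<^sup>2 / (2 * s))"
proof -
  have [measurable]: "Z i \<in> borel_measurable M" for i using sg by (rule subgaussian_measurable)
  have "prob {x \<in> space M. t < Max (range (\<lambda>i. \<bar>Z i x\<bar>))}
      \<le> prob (\<Union>i. {x \<in> space M. t \<le> \<bar>Z i x\<bar>})"
    by (intro finite_measure_mono) (auto simp: Max_gr_iff dest: less_imp_le)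
  also have "\<dots> \<le> (\<Sum>i\<in>UNIV. prob {x \<in> space M. t \<le> \<bar>Z i x\<bar>})"
    by (rule measure_UNION_le) auto
  also have "\<dots> \<le> (\<Sum>i\<in>(UNIV :: 'i set). 2 * exp (- t\<^sup>2 / (2 * s)))"
    by (intro sum_mono subgaussian_abs_tail sg t)
  finally show ?thesis by simp
qed

section \<open>The smoothed hinge loss\<close>

definition dBdelta :: "real \<Rightarrow> real \<Rightarrow> real" where
  "dBdelta \<delta> t =
     (if t \<le> 1 - \<delta> then -1
      else if t \<le> 1 + \<delta> then - (1 - t + \<delta>)\<^sup>2 * (2 * \<delta> - (1 - t)) / (4 * \<delta> ^ 3)
      else 0)"

definition d2Bdelta :: "real \<Rightarrow> real \<Rightarrow> real" where
  "d2Bdelta \<delta> t =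
     (if t \<le> 1 - \<delta> then 0
      else if t \<le> 1 + \<delta> then 3 * (1 - t + \<delta>) * (\<delta> - (1 - t)) / (4 * \<delta> ^ 3)
      else 0)"

lemma Bdelta_piecewise:
  assumes "\<delta> > 0"
  shows "Bdelta \<delta> = (\<lambda>t.
     if t \<le> 1 - \<delta> then 1 - t
     else if t \<le> 1 + \<delta> then (1 / (8 * \<delta> ^ 3)) *
       ((1 - t + \<delta>) ^ 4 / 2 - (1 - t - \<delta>) * (1 - t + \<delta>) ^ 3)
     else 0)"
proof (rule ext, goal_cases)
  case (1 t)
  show ?case
  proof (cases "t = 1 - \<delta>")
    case True
    show ?thesis
      unfolding True using assms by (simp add: Bdelta_def field_simps power_numeral_reduce)
  qed (use assms in \<open>auto simp: Bdelta_def abs_if max_def\<close>)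
qed

lemma Bdelta_has_derivative:
  assumes "\<delta> > 0"
  shows "(Bdelta \<delta> has_real_derivative dBdelta \<delta> t) (at t)"
  unfolding Bdelta_piecewise[OF assms] dBdelta_def
proof (intro DERIV_piecewise)
  show "((\<lambda>t. (1 / (8 * \<delta> ^ 3)) * ((1 - t + \<delta>) ^ 4 / 2 - (1 - t - \<delta>) * (1 - t + \<delta>) ^ 3))
      has_real_derivative - (1 - t + \<delta>)\<^sup>2 * (2 * \<delta> - (1 - t)) / (4 * \<delta> ^ 3)) (at t)" for t
    using assms by (auto intro!: derivative_eq_intros simp: field_simps power_numeral_reduce)
qed (use assms in \<open>auto intro!: derivative_eq_intros simp: field_simps power_numeral_reduce\<close>)

lemma dBdelta_has_derivative:
  assumes "\<delta> > 0"
  shows "(dBdelta \<delta> has_real_derivative d2Bdelta \<delta> t) (at t)"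
  unfolding dBdelta_def d2Bdelta_def
proof (intro DERIV_piecewise)
  show "((\<lambda>t. - (1 - t + \<delta>)\<^sup>2 * (2 * \<delta> - (1 - t)) / (4 * \<delta> ^ 3))
      has_real_derivative 3 * (1 - t + \<delta>) * (\<delta> - (1 - t)) / (4 * \<delta> ^ 3)) (at t)" for t
    using assms by (auto intro!: derivative_eq_intros simp: field_simps power_numeral_reduce)
qed (use assms in \<open>auto intro!: derivative_eq_intros simp: field_simps power_numeral_reduce\<close>)

lemma deriv_Bdelta: "\<delta> > 0 \<Longrightarrow> deriv (Bdelta \<delta>) = dBdelta \<delta>"
  using Bdelta_has_derivative DERIV_imp_deriv by blast

lemma Bdelta_measurable [measurable]: "Bdelta \<delta> \<in> borel_measurable borel"
  unfolding Bdelta_def by measurable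

lemma dBdelta_measurable [measurable]: "dBdelta \<delta> \<in> borel_measurable borel"
  unfolding dBdelta_def by measurable

lemma abs_dBdelta_le:
  assumes "\<delta> > 0"
  shows "\<bar>dBdelta \<delta> t\<bar> \<le> 1"
proof (cases "1 - \<delta> < t \<and> t \<le> 1 + \<delta>")
  case True
  define v where "v = 1 - t + \<delta>"
  have v: "0 \<le> v" "v \<le> 2 * \<delta>" using True by (auto simp: v_def)
  have "dBdelta \<delta> t = - (v\<^sup>2 * (3 * \<delta> - v)) / (4 * \<delta> ^ 3)"
    using True by (simp add: dBdelta_def v_def algebra_simps)
  moreover have "0 \<le> v\<^sup>2 * (3 * \<delta> - v)" using v assms by simp
  moreover have "v\<^sup>2 * (3 * \<delta> - v) \<le> 4 * \<delta> ^ 3"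
  proof -
    have "4 * \<delta> ^ 3 - v\<^sup>2 * (3 * \<delta> - v) = (2 * \<delta> - v)\<^sup>2 * (v + \<delta>)"
      by (simp add: algebra_simps power2_eq_square power3_eq_cube)
    also have "\<dots> \<ge> 0" using v assms by simp
    finally show ?thesis by simp
  qed
  ultimately show ?thesis using assms by (simp add: divide_le_eq)
qed (auto simp: dBdelta_def)

lemma abs_d2Bdelta_le:
  assumes "\<delta> > 0"
  shows "\<bar>d2Bdelta \<delta> t\<bar> \<le> 3 / (4 * \<delta>)"
proof (cases "1 - \<delta> < t \<and> t \<le> 1 + \<delta>")
  case True
  define u where "u = 1 - t"
  have u: "- \<delta> \<le> u" "u \<le> \<delta>" using True by (auto simp: u_def)
  have "d2Bdelta \<delta> t = 3 * ((\<delta> + u) * (\<delta> - u)) / (4 * \<delta> ^ 3)"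
    using True by (simp add: d2Bdelta_def u_def algebra_simps)
  moreover have "0 \<le> (\<delta> + u) * (\<delta> - u)" using u by simp
  moreover have "3 * ((\<delta> + u) * (\<delta> - u)) / (4 * \<delta> ^ 3) \<le> 3 * \<delta>\<^sup>2 / (4 * \<delta> ^ 3)"
    using assms by (intro divide_right_mono) (auto simp: algebra_simps power2_eq_square)
  moreover have "3 * \<delta>\<^sup>2 / (4 * \<delta> ^ 3) = 3 / (4 * \<delta>)"
    using assms by (simp add: power2_eq_square power3_eq_cube)
  ultimately show ?thesis using assms by simp
qed (use assms in \<open>auto simp: d2Bdelta_def\<close>)

lemma Bdelta_lipschitz:
  assumes "\<delta> > 0"
  shows "\<bar>Bdelta \<delta> x - Bdelta \<delta> y\<bar> \<le> \<bar>x - y\<bar>"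
  using field_differentiable_bound[of UNIV "Bdelta \<delta>" "dBdelta \<delta>" 1 x y]
    Bdelta_has_derivative[OF assms] abs_dBdelta_le[OF assms] by simp

lemma dBdelta_lipschitz:
  assumes "\<delta> > 0"
  shows "\<bar>dBdelta \<delta> x - dBdelta \<delta> y\<bar> \<le> 3 / (4 * \<delta>) * \<bar>x - y\<bar>"
  using field_differentiable_bound[of UNIV "dBdelta \<delta>" "d2Bdelta \<delta>" "3 / (4 * \<delta>)" x y]
    dBdelta_has_derivative[OF assms] abs_d2Bdelta_le[OF assms] by simp

lemma Bdelta_le_linearization:
  assumes "\<delta> > 0"
  shows "Bdelta \<delta> (s + h) - Bdelta \<delta> s \<le> h * dBdelta \<delta> s + 3 / (4 * \<delta>) * h\<^sup>2"
proof -
  have "\<bar>dBdelta \<delta> x - dBdelta \<delta> s\<bar> \<le> 3 / (4 * \<delta>) * \<bar>h\<bar>" if "x \<in> closed_segment s (s + h)" for x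
  proof -
    have "\<bar>x - s\<bar> \<le> \<bar>h\<bar>" using dist_in_closed_segment[OF that] by (simp add: dist_real_def)
    then show ?thesis
      using assms by (intro order_trans[OF dBdelta_lipschitz[OF assms] mult_left_mono]) auto
  qed
  then have "\<bar>Bdelta \<delta> (s + h) - Bdelta \<delta> s - h * dBdelta \<delta> s\<bar>
      \<le> \<bar>h\<bar> * (3 / (4 * \<delta>) * \<bar>h\<bar>)"
    using vector_differentiable_bound_linearization[of "closed_segment s (s + h)" "Bdelta \<delta>" "dBdelta \<delta>"
        s "s + h" s "3 / (4 * \<delta>) * \<bar>h\<bar>"]
      Bdelta_has_derivative[OF assms]
    by (simp add: has_real_derivative_iff_has_vector_derivative[symmetric] has_field_derivative_at_within)
  also have "\<bar>h\<bar> * (3 / (4 * \<delta>) * \<bar>h\<bar>) = 3 / (4 * \<delta>) * h\<^sup>2"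
    by (simp add: power2_eq_square abs_mult_self_eq)
  finally show ?thesis using abs_le_D1 by linarith
qed

section \<open>The expected score vanishes at the risk minimiser\<close>

lemma (in prob_space) Bdelta_first_order_condition:
  assumes \<delta>: "\<delta> > 0"
    and [measurable]: "s \<in> borel_measurable M" "c \<in> borel_measurable M"
    and int_s: "integrable M s" and int_c2: "integrable M (\<lambda>x. (c x)\<^sup>2)"
    and min: "\<And>h. (\<integral>x. Bdelta \<delta> (s x) \<partial>M) \<le> (\<integral>x. Bdelta \<delta> (s x + h * c x) \<partial>M)"
  shows "(\<integral>x. dBdelta \<delta> (s x) * c x \<partial>M) = 0"
proof (rule eq_0_if_nonneg_linear_plus_quadratic)
  fix h
  have int_c: "integrable M c" by (rule square_integrable_imp_integrable) (use int_c2 in auto)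
  have int_B: "integrable M (\<lambda>x. Bdelta \<delta> (s x + h * c x))" for h
  proof (rule Bochner_Integration.integrable_bound)
    show "integrable M (\<lambda>x. \<bar>Bdelta \<delta> 0\<bar> + \<bar>s x\<bar> + \<bar>h\<bar> * \<bar>c x\<bar>)"
      using int_s int_c by auto
    show "AE x in M. norm (Bdelta \<delta> (s x + h * c x))
        \<le> norm (\<bar>Bdelta \<delta> 0\<bar> + \<bar>s x\<bar> + \<bar>h\<bar> * \<bar>c x\<bar>)"
    proof (rule AE_I2)
      fix x
      have "\<bar>Bdelta \<delta> (s x + h * c x) - Bdelta \<delta> 0\<bar> \<le> \<bar>s x\<bar> + \<bar>h\<bar> * \<bar>c x\<bar>"
        using Bdelta_lipschitz[OF \<delta>, of "s x + h * c x" 0] abs_triangle_ineq[of "s x" "h * c x"]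
        by (simp add: abs_mult)
      then show "norm (Bdelta \<delta> (s x + h * c x))
          \<le> norm (\<bar>Bdelta \<delta> 0\<bar> + \<bar>s x\<bar> + \<bar>h\<bar> * \<bar>c x\<bar>)"
        by simp
    qed
  qed measurable
  have int_dBc: "integrable M (\<lambda>x. dBdelta \<delta> (s x) * c x)"
    by (rule Bochner_Integration.integrable_bound[OF integrable_abs[OF int_c]])
       (use abs_dBdelta_le[OF \<delta>] in \<open>auto simp: abs_mult intro!: mult_left_le_one_le\<close>)
  define L where "L = 3 / (4 * \<delta>)"
  have "0 \<le> (\<integral>x. Bdelta \<delta> (s x + h * c x) \<partial>M) - (\<integral>x. Bdelta \<delta> (s x) \<partial>M)"
    using min[of h] by simp
  also have "\<dots> = (\<integral>x. Bdelta \<delta> (s x + h * c x) - Bdelta \<delta> (s x) \<partial>M)"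
    using int_B[of h] int_B[of 0] by simp
  also have "\<dots> \<le> (\<integral>x. h * (dBdelta \<delta> (s x) * c x) + L * h\<^sup>2 * (c x)\<^sup>2 \<partial>M)"
  proof (rule integral_mono)
    show "Bdelta \<delta> (s x + h * c x) - Bdelta \<delta> (s x)
        \<le> h * (dBdelta \<delta> (s x) * c x) + L * h\<^sup>2 * (c x)\<^sup>2" for x
      using Bdelta_le_linearization[OF \<delta>, of "s x" "h * c x"]
      by (simp add: L_def algebra_simps power_mult_distrib)
  qed (use int_B[of h] int_B[of 0] int_dBc int_c2 in auto)
  also have "\<dots> = h * (\<integral>x. dBdelta \<delta> (s x) * c x \<partial>M) + (L * (\<integral>x. (c x)\<^sup>2 \<partial>M)) * h\<^sup>2"
    using int_dBc int_c2 by (simp add: algebra_simps)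
  finally show "0 \<le> h * (\<integral>x. dBdelta \<delta> (s x) * c x \<partial>M) + (L * (\<integral>x. (c x)\<^sup>2 \<partial>M)) * h\<^sup>2" .
qed

lemma (in prob_space) Bdelta_score_mean_zero:
  fixes X :: "'a \<Rightarrow> real ^ 'p" and Y :: "'a \<Rightarrow> real"
  assumes \<delta>: "\<delta> > 0"
    and [measurable]: "X \<in> borel_measurable M" "Y \<in> borel_measurable M"
    and Y_le: "\<And>x. x \<in> space M \<Longrightarrow> \<bar>Y x\<bar> \<le> 1"
    and int_X2: "integrable M (\<lambda>x. (norm (X x))\<^sup>2)"
    and min: "\<And>\<beta>. (\<integral>x. Bdelta \<delta> (Y x * (X x \<bullet> \<beta>\<^sub>0)) \<partial>M)
                    \<le> (\<integral>x. Bdelta \<delta> (Y x * (X x \<bullet> \<beta>)) \<partial>M)"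
  shows "(\<integral>x. dBdelta \<delta> (Y x * (X x \<bullet> \<beta>\<^sub>0)) * (Y x * X x $ j) \<partial>M) = 0"
proof (rule Bdelta_first_order_condition[OF \<delta>])
  have "integrable M (\<lambda>x. norm (X x))"
    by (rule square_integrable_imp_integrable) (use int_X2 in auto)
  then show "integrable M (\<lambda>x. Y x * (X x \<bullet> \<beta>\<^sub>0))"
  proof (rule Bochner_Integration.integrable_bound[OF integrable_mult_right[where c = "norm \<beta>\<^sub>0"]])
    show "AE x in M. norm (Y x * (X x \<bullet> \<beta>\<^sub>0)) \<le> norm (norm \<beta>\<^sub>0 * norm (X x))"
    proof (rule AE_I2)
      fix x assume "x \<in> space M"
      have "\<bar>Y x * (X x \<bullet> \<beta>\<^sub>0)\<bar> \<le> \<bar>X x \<bullet> \<beta>\<^sub>0\<bar>"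
        using Y_le[OF \<open>x \<in> space M\<close>] by (simp add: abs_mult mult_left_le_one_le)
      then show "norm (Y x * (X x \<bullet> \<beta>\<^sub>0)) \<le> norm (norm \<beta>\<^sub>0 * norm (X x))"
        using Cauchy_Schwarz_ineq2[of "X x" \<beta>\<^sub>0] by (simp add: mult.commute)
    qed
  qed measurable
  show "integrable M (\<lambda>x. (Y x * X x $ j)\<^sup>2)"
  proof (rule Bochner_Integration.integrable_bound[OF int_X2])
    show "AE x in M. norm ((Y x * X x $ j)\<^sup>2) \<le> norm ((norm (X x))\<^sup>2)"
    proof (rule AE_I2)
      fix x assume "x \<in> space M"
      have "\<bar>Y x * X x $ j\<bar> \<le> norm (X x)"
        using Y_le[OF \<open>x \<in> space M\<close>] component_le_norm_cart[of "X x" j]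
        by (metis abs_ge_zero abs_mult mult_left_le_one_le order_trans)
      from power_mono[OF this abs_ge_zero, of 2]
      show "norm ((Y x * X x $ j)\<^sup>2) \<le> norm ((norm (X x))\<^sup>2)" by simp
    qed
  qed measurable
  show "(\<integral>x. Bdelta \<delta> (Y x * (X x \<bullet> \<beta>\<^sub>0)) \<partial>M)
      \<le> (\<integral>x. Bdelta \<delta> (Y x * (X x \<bullet> \<beta>\<^sub>0) + h * (Y x * X x $ j)) \<partial>M)" for h
    using min[of "\<beta>\<^sub>0 + axis j h"] by (simp add: inner_add_right inner_axis algebra_simps)
qed measurable

lemma (in prob_space) Bdelta_score_subgaussian:
  fixes X :: "'a \<Rightarrow> real ^ 'p" and Y :: "'a \<Rightarrow> real"
  assumes \<delta>: "\<delta> > 0"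
    and [measurable]: "X \<in> borel_measurable M" "Y \<in> borel_measurable M"
    and Y_le: "\<And>x. x \<in> space M \<Longrightarrow> \<bar>Y x\<bar> \<le> 1"
    and X_le: "AE x in M. \<forall>k. \<bar>X x $ k\<bar> \<le> c"
    and min: "\<And>\<beta>. (\<integral>x. Bdelta \<delta> (Y x * (X x \<bullet> \<beta>\<^sub>0)) \<partial>M)
                    \<le> (\<integral>x. Bdelta \<delta> (Y x * (X x \<bullet> \<beta>)) \<partial>M)"
  shows "subgaussian M (\<lambda>x. - dBdelta \<delta> (Y x * (X x \<bullet> \<beta>\<^sub>0)) * Y x * X x $ j) (c\<^sup>2)"
proof (rule subgaussian_if_bounded_mean_zero)
  show "AE x in M. \<bar>- dBdelta \<delta> (Y x * (X x \<bullet> \<beta>\<^sub>0)) * Y x * X x $ j\<bar> \<le> c"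
    using X_le AE_space
  proof eventually_elim
    case (elim x)
    have "\<bar>dBdelta \<delta> (Y x * (X x \<bullet> \<beta>\<^sub>0))\<bar> * \<bar>Y x\<bar> * \<bar>X x $ j\<bar> \<le> 1 * 1 * c"
      using elim Y_le abs_dBdelta_le[OF \<delta>] by (intro mult_mono) auto
    then show ?case by (simp add: abs_mult)
  qed
  have "integrable M (\<lambda>x. (norm (X x))\<^sup>2)"
  proof (rule integrable_const_bound)
    show "AE x in M. norm ((norm (X x))\<^sup>2) \<le> (real CARD('p) * c)\<^sup>2"
      using X_le
    proof eventually_elim
      case (elim x)
      have "norm (X x) \<le> (\<Sum>k\<in>UNIV. \<bar>X x $ k\<bar>)" by (rule norm_le_l1_cart)
      also have "\<dots> \<le> real CARD('p) * c"
        using elim sum_bounded_above[of UNIV "\<lambda>k. \<bar>X x $ k\<bar>" c] by simp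
      finally show ?case by (simp add: power_mono)
    qed
  qed measurable
  from Bdelta_score_mean_zero[OF \<delta> _ _ Y_le this min]
  show "expectation (\<lambda>x. - dBdelta \<delta> (Y x * (X x \<bullet> \<beta>\<^sub>0)) * Y x * X x $ j) = 0"
    by (simp add: mult.assoc)
qed measurable

theorem lemma2:
  fixes P :: "'w measure"
    and X :: "nat \<Rightarrow> 'w \<Rightarrow> real ^ 'p"
    and Y :: "nat \<Rightarrow> 'w \<Rightarrow> real"
    and n :: nat and \<delta> M :: real
    and \<beta>s :: "real ^ 'p"
  assumes P: "prob_space P"
    and n: "n \<ge> 1"
    and \<delta>: "\<delta> > 0"
    and meas_X: "\<And>i. i < n \<Longrightarrow> X i \<in> borel_measurable P"
    and meas_Y: "\<And>i. i < n \<Longrightarrow> Y i \<in> borel_measurable P"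
    and Y_pm: "\<And>i \<omega>. i < n \<Longrightarrow> \<omega> \<in> space P \<Longrightarrow> Y i \<omega> \<in> {-1, 1}"
    and indep: "prob_space.indep_vars P (\<lambda>_. borel) (\<lambda>i \<omega>. (X i \<omega>, Y i \<omega>)) {..<n}"
    and ident: "\<And>i. i < n \<Longrightarrow>
       distr P borel (\<lambda>\<omega>. (X i \<omega>, Y i \<omega>)) = distr P borel (\<lambda>\<omega>. (X 0 \<omega>, Y 0 \<omega>))"
    and beta_min: "\<And>\<beta>. (\<integral>\<omega>. Bdelta \<delta> (Y 0 \<omega> * (X 0 \<omega> \<bullet> \<beta>s)) \<partial>P)
                        \<le> (\<integral>\<omega>. Bdelta \<delta> (Y 0 \<omega> * (X 0 \<omega> \<bullet> \<beta>)) \<partial>P)"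
    and beta_unique: "\<And>\<beta>. (\<integral>\<omega>. Bdelta \<delta> (Y 0 \<omega> * (X 0 \<omega> \<bullet> \<beta>)) \<partial>P)
                        \<le> (\<integral>\<omega>. Bdelta \<delta> (Y 0 \<omega> * (X 0 \<omega> \<bullet> \<beta>s)) \<partial>P) \<Longrightarrow> \<beta> = \<beta>s"
    and A3: "AE \<omega> in P. \<forall>j. sqrt (\<Sum>i<n. (X i \<omega> $ j)\<^sup>2) \<le> M"
    and A4: "\<And>c. c \<in> {-1, 1::real} \<Longrightarrow>
       \<exists>f :: real ^ 'p \<Rightarrow> real.
          continuous_on UNIV f \<and> (\<forall>x. f x \<ge> 0) \<and>
          (\<integral>\<^sup>+ x. ennreal (f x) \<partial>lborel) = 1 \<and>
          integrable lborel (\<lambda>x. norm x * f x) \<and>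
          (\<forall>A \<in> sets borel.
             emeasure P {\<omega> \<in> space P. X 0 \<omega> \<in> A \<and> Y 0 \<omega> = c}
             = emeasure P {\<omega> \<in> space P. Y 0 \<omega> = c} * (\<integral>\<^sup>+ x\<in>A. ennreal (f x) \<partial>lborel))"
  defines "z \<equiv> \<lambda>j \<omega>. (1 / real n) *
              (\<Sum>i<n. - deriv (Bdelta \<delta>) (Y i \<omega> * (X i \<omega> \<bullet> \<beta>s)) * Y i \<omega> * (X i \<omega> $ j))"
  shows "(\<forall>j. subgaussian P (z j) (M\<^sup>2 / real n)) \<and>
         (\<forall>t > 0. measure P {\<omega> \<in> space P. Max ((\<lambda>j. \<bar>z j \<omega>\<bar>) ` UNIV) > t}
                   \<le> 2 * real CARD('p) * exp (- t\<^sup>2 * real n / (2 * M\<^sup>2)))"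
proof -
  interpret prob_space P by (rule P)
  have "0 < n" using n by simp
  define g where "g j p = - dBdelta \<delta> (snd p * (fst p \<bullet> \<beta>s)) * snd p * (fst p $ j)"
    for j and p :: "(real ^ 'p) \<times> real"
  have [measurable]: "g j \<in> borel_measurable borel" for j
    unfolding g_def borel_prod[symmetric] by measurable
  have pair_measurable [measurable]: "(\<lambda>\<omega>. (X i \<omega>, Y i \<omega>)) \<in> borel_measurable P" if "i < n" for i
    using meas_X[OF that] meas_Y[OF that] by measurable
  have summand_subgaussian: "subgaussian P (\<lambda>\<omega>. g j (X i \<omega>, Y i \<omega>)) (M\<^sup>2)" if "i < n" for i j
  proof -
    have risk_eq: "(\<integral>\<omega>. Bdelta \<delta> (Y i \<omega> * (X i \<omega> \<bullet> \<beta>)) \<partial>P)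
        = (\<integral>\<omega>. Bdelta \<delta> (Y 0 \<omega> * (X 0 \<omega> \<bullet> \<beta>)) \<partial>P)" for \<beta>
    proof -
      have "(\<lambda>p. Bdelta \<delta> (snd p * (fst p \<bullet> \<beta>))) \<in> borel_measurable borel"
        unfolding borel_prod[symmetric] by measurable
      from integral_comp_eq_if_distr_eq
          [OF ident[OF that] pair_measurable[OF that] pair_measurable[OF \<open>0 < n\<close>] this]
      show ?thesis by simp
    qed
    have min_i: "(\<integral>\<omega>. Bdelta \<delta> (Y i \<omega> * (X i \<omega> \<bullet> \<beta>s)) \<partial>P)
        \<le> (\<integral>\<omega>. Bdelta \<delta> (Y i \<omega> * (X i \<omega> \<bullet> \<beta>)) \<partial>P)" for \<beta>
      unfolding risk_eq by (rule beta_min)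
    have X_le: "AE \<omega> in P. \<forall>k. \<bar>X i \<omega> $ k\<bar> \<le> M"
      using A3
    proof (eventually_elim, intro allI)
      fix \<omega> k assume "\<forall>k. sqrt (\<Sum>i<n. (X i \<omega> $ k)\<^sup>2) \<le> M"
      have "\<bar>X i \<omega> $ k\<bar> \<le> sqrt (\<Sum>i<n. (X i \<omega> $ k)\<^sup>2)"
        using that by (intro abs_le_sqrt_sum_squares) auto
      also have "\<dots> \<le> M" using \<open>\<forall>k. sqrt (\<Sum>i<n. (X i \<omega> $ k)\<^sup>2) \<le> M\<close> ..
      finally show "\<bar>X i \<omega> $ k\<bar> \<le> M" .
    qed
    have Y_le: "\<bar>Y i \<omega>\<bar> \<le> 1" if "\<omega> \<in> space P" for \<omega>
      using Y_pm[OF \<open>i < n\<close> that] by auto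
    have "subgaussian P
        (\<lambda>\<omega>. - dBdelta \<delta> (Y i \<omega> * (X i \<omega> \<bullet> \<beta>s)) * Y i \<omega> * X i \<omega> $ j) (M\<^sup>2)"
      using Bdelta_score_subgaussian[OF \<delta> meas_X[OF that] meas_Y[OF that] Y_le X_le min_i] by simp
    then show ?thesis by (simp add: g_def)
  qed
  have subgaussian_z: "subgaussian P (z j) (M\<^sup>2 / real n)" for j
  proof -
    have "indep_vars (\<lambda>_. borel) (\<lambda>i \<omega>. g j (X i \<omega>, Y i \<omega>)) {..<n}"
      by (rule indep_vars_compose2[OF indep]) measurable
    then have "subgaussian P (\<lambda>\<omega>. \<Sum>i<n. g j (X i \<omega>, Y i \<omega>)) (\<Sum>i<n. M\<^sup>2)"
      by (intro subgaussian_sum_indep summand_subgaussian) auto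
    from subgaussian_scale[OF this, of "1 / real n"] show ?thesis
      using n by (simp add: z_def g_def deriv_Bdelta[OF \<delta>] power2_eq_square)
  qed
  moreover have "measure P {\<omega> \<in> space P. Max ((\<lambda>j. \<bar>z j \<omega>\<bar>) ` UNIV) > t}
      \<le> 2 * real CARD('p) * exp (- t\<^sup>2 * real n / (2 * M\<^sup>2))" if "t > 0" for t
    using subgaussian_max_abs_tail[OF subgaussian_z that] by simp
  ultimately show ?thesis by blast
qed

end
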